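(* Let $F$ be a connected graph of order at least $2$ with vertices $x_1,\dots,x_{|V(F)|}$. For each $i$, take a new graph $T_i\in\{C_{4,2},C_{5,1}\}$ (all vertex-disjoint from each other and from $F$) and identify the leaf of $T_i$ with $x_i$; call the resulting graph $G_F$. Then $\gamma^{d}_2(G_F)=\frac{|V(G_F)|}{3}$.
   Context: All graphs are finite and simple. A set $S$ of vertices of a graph $G$ is a disjunctive dominating set of $G$ if every vertex not in $S$ is adjacent to a vertex of $S$ or has at least two vertices of $S$ at distance exactly $2$ from it in $G$. The disjunctive domination number $\gamma^{d}_2(G)$ is the minimum cardinality of a disjunctive dominating set of $G$. For $s\geq 3$ and $t\geq 1$, $C_{s,t}$ denotes the graph obtained from a cycle $C_s$ and a path with $t$ edges by identifying one end vertex of the path with a vertex of the cycle; the other end vertex of the path (of degree $1$) is called the leaf of $C_{s,t}$. Thus $C_{4,2}$ and $C_{5,1}$ each have $6$ vertices. *)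

theory Defs
  imports Complex_Main
begin

definition simple_graph :: "'v set \<Rightarrow> ('v \<Rightarrow> 'v \<Rightarrow> bool) \<Rightarrow> bool" where
  "simple_graph V E \<longleftrightarrow> finite V \<and> (\<forall>u v. E u v \<longrightarrow> u \<in> V \<and> v \<in> V)
     \<and> (\<forall>u v. E u v \<longrightarrow> E v u) \<and> (\<forall>u. \<not> E u u)"

definition connected_graph :: "'v set \<Rightarrow> ('v \<Rightarrow> 'v \<Rightarrow> bool) \<Rightarrow> bool" where
  "connected_graph V E \<longleftrightarrow> V \<noteq> {} \<and>
     (\<forall>u\<in>V. \<forall>v\<in>V. (\<lambda>a b. E a b \<and> a \<in> V \<and> b \<in> V)\<^sup>*\<^sup>* u v)"

definition dist2 :: "'v set \<Rightarrow> ('v \<Rightarrow> 'v \<Rightarrow> bool) \<Rightarrow> 'v \<Rightarrow> 'v \<Rightarrow> bool" where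
  "dist2 V E u v \<longleftrightarrow> u \<noteq> v \<and> \<not> E u v \<and> (\<exists>w\<in>V. E u w \<and> E w v)"

definition disj_dom_set :: "'v set \<Rightarrow> ('v \<Rightarrow> 'v \<Rightarrow> bool) \<Rightarrow> 'v set \<Rightarrow> bool" where
  "disj_dom_set V E S \<longleftrightarrow> S \<subseteq> V \<and>
     (\<forall>v \<in> V - S. (\<exists>s\<in>S. E v s) \<or> card {s\<in>S. dist2 V E v s} \<ge> 2)"

definition disj_dom_num :: "'v set \<Rightarrow> ('v \<Rightarrow> 'v \<Rightarrow> bool) \<Rightarrow> nat" where
  "disj_dom_num V E = (LEAST n. \<exists>S. disj_dom_set V E S \<and> card S = n)"

text \<open>C_{s,t}: vertices 0..s+t-1; cycle 0-1-...-(s-1)-0; path 0 - s - (s+1) - ... - (s+t-1).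
  The leaf is s+t-1.\<close>
definition cst_edge :: "nat \<Rightarrow> nat \<Rightarrow> nat \<Rightarrow> nat \<Rightarrow> bool" where
  "cst_edge s t i j \<longleftrightarrow> i < s + t \<and> j < s + t \<and>
     ( (i < s \<and> j < s \<and> (j = (i + 1) mod s \<or> i = (j + 1) mod s))
     \<or> (t \<ge> 1 \<and> ((i = 0 \<and> j = s) \<or> (j = 0 \<and> i = s)))
     \<or> (i \<ge> s \<and> j \<ge> s \<and> (j = i + 1 \<or> i = j + 1)))"

definition cst_leaf :: "nat \<Rightarrow> nat \<Rightarrow> nat" where
  "cst_leaf s t = s + t - 1"

text \<open>G_F: for each vertex x of F, a copy of C_{s,t} with (s,t) = T x, whose leaf is
  identified with x.  Vertex Inl x is x itself; Inr (x,j) for j < s+t-1 is the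
  non-leaf vertex j of the copy attached at x.\<close>
definition GF_V :: "'a set \<Rightarrow> ('a \<Rightarrow> nat \<times> nat) \<Rightarrow> ('a + 'a \<times> nat) set" where
  "GF_V V T = Inl ` V \<union> {Inr (x, j) | x j. x \<in> V \<and> j < cst_leaf (fst (T x)) (snd (T x))}"

fun GF_E :: "'a set \<Rightarrow> ('a \<Rightarrow> 'a \<Rightarrow> bool) \<Rightarrow> ('a \<Rightarrow> nat \<times> nat)
             \<Rightarrow> ('a + 'a \<times> nat) \<Rightarrow> ('a + 'a \<times> nat) \<Rightarrow> bool" where
  "GF_E V E T (Inl x) (Inl y) = E x y"
| "GF_E V E T (Inr (x, i)) (Inr (y, j)) = (x = y \<and> x \<in> V \<and>
      cst_edge (fst (T x)) (snd (T x)) i j \<and>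
      i < cst_leaf (fst (T x)) (snd (T x)) \<and> j < cst_leaf (fst (T x)) (snd (T x)))"
| "GF_E V E T (Inl x) (Inr (y, j)) = (x = y \<and> x \<in> V \<and>
      j < cst_leaf (fst (T x)) (snd (T x)) \<and>
      cst_edge (fst (T x)) (snd (T x)) (cst_leaf (fst (T x)) (snd (T x))) j)"
| "GF_E V E T (Inr (y, j)) (Inl x) = (x = y \<and> x \<in> V \<and>
      j < cst_leaf (fst (T x)) (snd (T x)) \<and>
      cst_edge (fst (T x)) (snd (T x)) (cst_leaf (fst (T x)) (snd (T x))) j)"

end

theory Submission
  imports Defs
begin

text \<open>Let \<open>pendant T x\<close> be the copy of \<open>C_{4,2}\<close> or \<open>C_{5,1}\<close> hanging at \<open>x\<close>, with its six
  vertices, \<open>x\<close> included. A disjunctive dominating set \<open>S\<close> meets every pendant in at least two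
  vertices: if \<open>S \<inter> pendant T x \<subseteq> {b}\<close>, some non-leaf vertex \<open>v\<close> of the copy that is not
  adjacent to the leaf satisfies \<open>v \<noteq> b\<close> and is not adjacent to \<open>b\<close>; since every vertex within
  distance two of \<open>v\<close> lies in the pendant, \<open>v\<close> has no neighbour in \<open>S\<close> and at most one vertex
  of \<open>S\<close> at distance two. Conversely, the cycle vertex 2 together with the neighbour of the leaf,
  taken in every copy, dominates \<open>G_F\<close>. So the disjunctive domination number is
  \<open>2 |V(F)| = |V(G_F)| / 3\<close>.\<close>

definition cst_leaf_nbr :: "nat \<Rightarrow> nat \<Rightarrow> nat" where
  "cst_leaf_nbr s t = (if t = 1 then 0 else s + t - 2)"

lemma cst_edge_sym: "cst_edge s t i j = cst_edge s t j i"
  by (auto simp: cst_edge_def)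

lemma cst_edge_leaf_iff:
  assumes "1 \<le> s" "1 \<le> t"
  shows "cst_edge s t (cst_leaf s t) j \<longleftrightarrow> j = cst_leaf_nbr s t"
  using assms unfolding cst_edge_def cst_leaf_def cst_leaf_nbr_def by (simp, arith)

lemma cst_leaf_eq_5: "(s, t) \<in> {(4, 2), (5, 1)} \<Longrightarrow> cst_leaf s t = 5"
  by (auto simp: cst_leaf_def)

lemma ex_cst_vertex_nonadjacent:
  assumes "(s, t) \<in> {(4, 2), (5, 1)}" "k \<le> 5"
  shows "\<exists>j<5. j \<noteq> cst_leaf_nbr s t \<and> j \<noteq> k \<and> \<not> cst_edge s t j k"
proof -
  have "\<forall>(s, t)\<in>{(4, 2), (5, 1)}. \<forall>k\<in>{0, 1, 2, 3, 4, 5}. \<exists>j\<in>{0, 1, 2, 3, 4}.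
      j \<noteq> cst_leaf_nbr s t \<and> j \<noteq> k \<and> \<not> cst_edge s t j k"
    by (simp add: cst_edge_def cst_leaf_nbr_def)
  moreover have "k \<in> {0, 1, 2, 3, 4, 5}"
    using assms(2) by auto
  ultimately obtain j where "j \<in> {0, 1, 2, 3, 4}" "j \<noteq> cst_leaf_nbr s t" "j \<noteq> k" "\<not> cst_edge s t j k"
    using assms(1) by blast
  then show ?thesis
    by (intro exI[of _ j]) auto
qed

lemma cst_edge_2_or_leaf_nbr:
  assumes "(s, t) \<in> {(4, 2), (5, 1)}" "j < 5" "j \<noteq> 2" "j \<noteq> cst_leaf_nbr s t"
  shows "cst_edge s t j 2 \<or> cst_edge s t j (cst_leaf_nbr s t)"
proof -
  have "\<forall>(s, t)\<in>{(4, 2), (5, 1)}. \<forall>j\<in>{0, 1, 3, 4}.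
      j \<noteq> cst_leaf_nbr s t \<longrightarrow> cst_edge s t j 2 \<or> cst_edge s t j (cst_leaf_nbr s t)"
    by (simp add: cst_edge_def cst_leaf_nbr_def)
  moreover have "j \<in> {0, 1, 3, 4}"
    using assms(2,3) by auto
  ultimately show ?thesis
    using assms(1,4) by blast
qed

lemma disj_dom_set_two_le_card_Int:
  assumes "disj_dom_set V E S" "finite S" "v \<in> V - S"
    and "\<And>s. s \<in> S \<Longrightarrow> \<not> E v s"
    and "\<And>w. dist2 V E v w \<Longrightarrow> w \<in> B"
  shows "2 \<le> card (S \<inter> B)"
proof -
  have "2 \<le> card {s\<in>S. dist2 V E v s}"
    using assms(1,3,4) by (auto simp: disj_dom_set_def)
  also have "\<dots> \<le> card (S \<inter> B)"
    using assms(2,5) by (intro card_mono) auto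
  finally show ?thesis .
qed

lemma disj_dom_num_eqI:
  assumes "disj_dom_set V E S" "\<And>S'. disj_dom_set V E S' \<Longrightarrow> card S \<le> card S'"
  shows "disj_dom_num V E = card S"
  unfolding disj_dom_num_def by (rule Least_equality) (use assms in auto)

definition pendant :: "('a \<Rightarrow> nat \<times> nat) \<Rightarrow> 'a \<Rightarrow> ('a + 'a \<times> nat) set" where
  "pendant T x = insert (Inl x) ((\<lambda>j. Inr (x, j)) ` {..<cst_leaf (fst (T x)) (snd (T x))})"

lemma GF_V_eq_UN_pendant: "GF_V V T = (\<Union>x\<in>V. pendant T x)"
  by (auto simp: GF_V_def pendant_def)

lemma finite_pendant: "finite (pendant T x)"
  by (simp add: pendant_def)

lemma card_pendant: "card (pendant T x) = Suc (cst_leaf (fst (T x)) (snd (T x)))"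
  by (simp add: pendant_def card_image inj_on_def image_iff)

lemma GF_E_Inr_in_pendant: "GF_E V E T (Inr (x, j)) w \<Longrightarrow> w \<in> pendant T x"
  by (erule GF_E.elims) (auto simp: pendant_def)

lemma GF_E_Inr_Inl:
  assumes "T x = (s, t)" "1 \<le> s" "1 \<le> t" "GF_E V E T (Inr (x, j)) (Inl y)"
  shows "y = x \<and> j = cst_leaf_nbr s t"
  using assms cst_edge_leaf_iff by auto

lemma dist2_Inr_in_pendant:
  assumes "T x = (s, t)" "1 \<le> s" "1 \<le> t" "j \<noteq> cst_leaf_nbr s t"
    and "dist2 (GF_V V T) (GF_E V E T) (Inr (x, j)) w"
  shows "w \<in> pendant T x"
proof -
  obtain u where u: "GF_E V E T (Inr (x, j)) u" "GF_E V E T u w"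
    using assms(5) by (auto simp: dist2_def)
  have "u \<noteq> Inl x"
    using GF_E_Inr_Inl[where T = T and x = x, OF assms(1-3)] u(1) assms(4) by blast
  with GF_E_Inr_in_pendant[OF u(1)] obtain k where "u = Inr (x, k)"
    by (auto simp: pendant_def)
  with u(2) show ?thesis by (blast intro: GF_E_Inr_in_pendant)
qed

lemma finite_GF_V: "finite V \<Longrightarrow> finite (GF_V V T)"
  by (simp add: GF_V_eq_UN_pendant finite_pendant)

lemma card_GF_V:
  assumes "\<forall>x\<in>V. T x \<in> {(4, 2), (5, 1)}" "finite V"
  shows "card (GF_V V T) = 6 * card V"
proof -
  have "card (GF_V V T) = (\<Sum>x\<in>V. card (pendant T x))"
    unfolding GF_V_eq_UN_pendant
    using assms(2) finite_pendant by (intro card_UN_disjoint) (auto simp: pendant_def)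
  also have "\<dots> = (\<Sum>x\<in>V. 6)"
    using assms(1) by (intro sum.cong) (auto simp: card_pendant cst_leaf_def)
  finally show ?thesis by simp
qed

lemma ex_pendant_vertex_nonadjacent:
  assumes "T x = (s, t)" "(s, t) \<in> {(4, 2), (5, 1)}"
  shows "\<exists>j<5. j \<noteq> cst_leaf_nbr s t \<and> Inr (x, j) \<noteq> b \<and> \<not> GF_E V E T (Inr (x, j)) b"
proof -
  have leaf: "cst_leaf s t = 5"
    using assms(2) by (rule cst_leaf_eq_5)
  consider "b = Inl x" | k where "k < 5" "b = Inr (x, k)" | "b \<notin> pendant T x"
    using assms(1) leaf by (auto simp: pendant_def)
  then show ?thesis
  proof cases
    case 1
    obtain j where "j < 5" "j \<noteq> cst_leaf_nbr s t" "\<not> cst_edge s t j 5"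
      using ex_cst_vertex_nonadjacent[OF assms(2), of 5] by auto
    then show ?thesis
      using 1 assms(1) leaf by (auto simp: cst_edge_sym)
  next
    case (2 k)
    obtain j where "j < 5" "j \<noteq> cst_leaf_nbr s t" "j \<noteq> k" "\<not> cst_edge s t j k"
      using ex_cst_vertex_nonadjacent[OF assms(2), of k] 2(1) by auto
    then show ?thesis
      using 2 assms(1) leaf by auto
  next
    case 3
    obtain j where j: "j < 5" "j \<noteq> cst_leaf_nbr s t"
      using ex_cst_vertex_nonadjacent[OF assms(2), of 0] by auto
    then have "Inr (x, j) \<in> pendant T x"
      using assms(1) leaf by (simp add: pendant_def)
    with j 3 show ?thesis
      by (blast dest: GF_E_Inr_in_pendant)
  qed
qed

lemma two_le_card_Int_pendant:
  assumes "T x \<in> {(4, 2), (5, 1)}" "x \<in> V"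
    and "disj_dom_set (GF_V V T) (GF_E V E T) S" "finite S"
  shows "2 \<le> card (S \<inter> pendant T x)"
proof (rule ccontr)
  assume "\<not> ?thesis"
  then have "card (S \<inter> pendant T x) \<le> Suc 0"
    by simp
  then obtain b where b: "S \<inter> pendant T x \<subseteq> {b}"
    using card_le_Suc0_iff_eq[of "S \<inter> pendant T x"] assms(4) by blast
  obtain s t where st: "T x = (s, t)"
    by fastforce
  with assms(1) have gadget: "(s, t) \<in> {(4, 2), (5, 1)}"
    by simp
  then have "1 \<le> s" "1 \<le> t"
    by auto
  obtain j where j: "j < 5" "j \<noteq> cst_leaf_nbr s t" "Inr (x, j) \<noteq> b"
      "\<not> GF_E V E T (Inr (x, j)) b"
    using ex_pendant_vertex_nonadjacent[where T = T and x = x, OF st gadget] by blast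
  have v: "Inr (x, j) \<in> pendant T x"
    using j(1) st cst_leaf_eq_5[OF gadget] by (simp add: pendant_def)
  have "2 \<le> card (S \<inter> pendant T x)"
  proof (rule disj_dom_set_two_le_card_Int[OF assms(3,4)])
    show "Inr (x, j) \<in> GF_V V T - S"
      using v b j(3) assms(2) GF_V_eq_UN_pendant by blast
    show "\<not> GF_E V E T (Inr (x, j)) u" if "u \<in> S" for u
      using that b j(4) GF_E_Inr_in_pendant[of V E T x j u] by blast
    show "w \<in> pendant T x" if "dist2 (GF_V V T) (GF_E V E T) (Inr (x, j)) w" for w
      using dist2_Inr_in_pendant[OF st \<open>1 \<le> s\<close> \<open>1 \<le> t\<close> j(2) that] .
  qed
  with \<open>\<not> ?thesis\<close> show False ..
qed

lemma card_disj_dom_set_GF_ge: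
  assumes "\<forall>x\<in>V. T x \<in> {(4, 2), (5, 1)}" "finite V"
    and "disj_dom_set (GF_V V T) (GF_E V E T) S"
  shows "2 * card V \<le> card S"
proof -
  have "finite S"
    using assms(3) finite_GF_V[OF assms(2)] by (auto simp: disj_dom_set_def intro: finite_subset)
  have "2 * card V = (\<Sum>x\<in>V. 2)"
    by simp
  also have "\<dots> \<le> (\<Sum>x\<in>V. card (S \<inter> pendant T x))"
    using assms \<open>finite S\<close> by (intro sum_mono two_le_card_Int_pendant) auto
  also have "\<dots> = card (\<Union>x\<in>V. S \<inter> pendant T x)"
    using assms(2) \<open>finite S\<close> by (intro card_UN_disjoint[symmetric]) (auto simp: pendant_def)
  also have "\<dots> \<le> card S"
    using \<open>finite S\<close> by (intro card_mono) auto
  finally show ?thesis .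
qed

definition GF_dom_set :: "'a set \<Rightarrow> ('a \<Rightarrow> nat \<times> nat) \<Rightarrow> ('a + 'a \<times> nat) set" where
  "GF_dom_set V T = (\<Union>x\<in>V. {Inr (x, 2), Inr (x, cst_leaf_nbr (fst (T x)) (snd (T x)))})"

lemma card_GF_dom_set:
  assumes "\<forall>x\<in>V. T x \<in> {(4, 2), (5, 1)}" "finite V"
  shows "card (GF_dom_set V T) = 2 * card V"
proof -
  have "card (GF_dom_set V T)
      = (\<Sum>x\<in>V. card ({Inr (x, 2), Inr (x, cst_leaf_nbr (fst (T x)) (snd (T x)))} :: ('a + 'a \<times> nat) set))"
    unfolding GF_dom_set_def using assms(2) by (subst card_UN_disjoint) auto
  also have "\<dots> = (\<Sum>x\<in>V. 2)"
    using assms(1) by (intro sum.cong) (auto simp: cst_leaf_nbr_def)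
  finally show ?thesis
    by simp
qed

lemma disj_dom_set_GF_dom_set:
  assumes "\<forall>x\<in>V. T x \<in> {(4, 2), (5, 1)}"
  shows "disj_dom_set (GF_V V T) (GF_E V E T) (GF_dom_set V T)"
  unfolding disj_dom_set_def
proof (intro conjI ballI disjI1)
  show "GF_dom_set V T \<subseteq> GF_V V T"
    using assms by (auto simp: GF_dom_set_def GF_V_def cst_leaf_def cst_leaf_nbr_def)
next
  fix v assume v: "v \<in> GF_V V T - GF_dom_set V T"
  then obtain x where x: "x \<in> V" "v \<in> pendant T x"
    by (auto simp: GF_V_eq_UN_pendant)
  obtain s t where st: "T x = (s, t)"
    by fastforce
  have gadget: "(s, t) \<in> {(4, 2), (5, 1)}"
    using assms x(1) st by force
  have leaf: "cst_leaf s t = 5" and nbr: "cst_leaf_nbr s t < 5"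
    using gadget by (auto simp: cst_leaf_def cst_leaf_nbr_def)
  have dom: "Inr (x, 2) \<in> GF_dom_set V T" "Inr (x, cst_leaf_nbr s t) \<in> GF_dom_set V T"
    using x(1) st by (auto simp: GF_dom_set_def)
  consider "v = Inl x" | j where "j < 5" "v = Inr (x, j)"
    using x(2) st leaf by (auto simp: pendant_def)
  then show "\<exists>u\<in>GF_dom_set V T. GF_E V E T v u"
  proof cases
    case 1
    have "GF_E V E T v (Inr (x, cst_leaf_nbr s t))"
      using 1 x(1) st leaf nbr cst_edge_leaf_iff[of s t] gadget by auto
    with dom show ?thesis by blast
  next
    case (2 j)
    then have "j \<noteq> 2" "j \<noteq> cst_leaf_nbr s t"
      using v dom by auto
    then obtain w where w: "w \<in> {2, cst_leaf_nbr s t}" "cst_edge s t j w"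
      using cst_edge_2_or_leaf_nbr[OF gadget \<open>j < 5\<close>] by blast
    then have "GF_E V E T v (Inr (x, w))"
      using 2 x(1) st leaf nbr by auto
    moreover have "Inr (x, w) \<in> GF_dom_set V T"
      using w(1) dom by blast
    ultimately show ?thesis by blast
  qed
qed

theorem mainTheorem3:
  fixes V :: "'a set" and E :: "'a \<Rightarrow> 'a \<Rightarrow> bool" and T :: "'a \<Rightarrow> nat \<times> nat"
  assumes "simple_graph V E"
    and "connected_graph V E"
    and "card V \<ge> 2"
    and "\<forall>x\<in>V. T x \<in> {(4, 2), (5, 1)}"
  shows "real (disj_dom_num (GF_V V T) (GF_E V E T)) = real (card (GF_V V T)) / 3"
proof -
  have fin: "finite V"
    using assms(1) by (simp add: simple_graph_def)
  have "disj_dom_num (GF_V V T) (GF_E V E T) = card (GF_dom_set V T)"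
    using disj_dom_set_GF_dom_set[OF assms(4)]
    by (rule disj_dom_num_eqI)
      (simp add: card_GF_dom_set[OF assms(4) fin] card_disj_dom_set_GF_ge[OF assms(4) fin])
  then show ?thesis
    by (simp add: card_GF_dom_set[OF assms(4) fin] card_GF_V[OF assms(4) fin])
qed

end
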